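(* Let $\nu\ge 2$, let $n_1,\dots,n_\nu\ge 1$ be integers, $N=\sum_j n_j$, let $\Omega=\coprod_{j=1}^\nu P_j$ with $\#P_j=n_j$, and let $\Delta\{n_j\}\subset\mathbb{C}[S_N]$ and $\Pi$ be as in the context. For $i\ne j$ let $r_{ij}\in S_N$ be a transposition exchanging an element of $P_i$ with an element of $P_j$, let $\mathfrak r_{ij}:=\Pi r_{ij}\Pi$ (which equals $\Xi\big(\sum_{k\ne i,j}n_kE_{kk}+(n_i-1)E_{ii}+(n_j-1)E_{jj}+E_{ij}+E_{ji}\big)$ and in particular does not depend on the choice of $r_{ij}$, and $\mathfrak r_{ij}=\mathfrak r_{ji}$), and let $\tilde{\mathfrak r}_{ij}:=n_in_j\,\mathfrak r_{ij}$. Then $$[\tilde{\mathfrak r}_{ij},\tilde{\mathfrak r}_{jk}+\tilde{\mathfrak r}_{ik}]=0\quad\text{for pairwise distinct } i,j,k,$$ $$[\tilde{\mathfrak r}_{ij},\tilde{\mathfrak r}_{kl}]=0\quad\text{for pairwise distinct } i,j,k,l,$$ where $[x,y]=xy-yx$ in $\Delta\{n_j\}$.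
   Context: $S_N$ is the permutation group of $\Omega$, $Y\{n_j\}$ the subgroup of permutations preserving each $P_j$, $\Pi=\frac{1}{\prod_j n_j!}\sum_{h\in Y\{n_j\}}h$, and $\Delta\{n_j\}=\Pi\,\mathbb{C}[S_N]\,\Pi$. For a $\nu\times\nu$ nonnegative integer matrix $A=\{a_{ij}\}$ with row sums $\sum_j a_{ij}=n_i$ and column sums $\sum_i a_{ij}=n_j$, $\xi(A)$ denotes the double coset $\{g\in S_N:\#(g(P_i)\cap P_j)=a_{ij}\ \forall i,j\}$ and $\Xi(A)=\frac{1}{\#\xi(A)}\sum_{g\in\xi(A)}g$. $E_{ij}$ is the matrix unit with $1$ in position $(i,j)$ and $0$ elsewhere. *)

theory Defs
  imports Complex_Main "HOL-Combinatorics.Combinatorics"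
begin

type_synonym pt = "nat \<times> nat"
type_synonym perm = "pt \<Rightarrow> pt"
type_synonym galg = "perm \<Rightarrow> complex"  (* elements of C[S_N] as coefficient functions *)

definition Pblk :: "(nat \<Rightarrow> nat) \<Rightarrow> nat \<Rightarrow> pt set" where
  "Pblk n j = {j} \<times> {..<n j}"

definition Omega :: "nat \<Rightarrow> (nat \<Rightarrow> nat) \<Rightarrow> pt set" where
  "Omega nu n = (\<Union>j<nu. Pblk n j)"

definition SN :: "nat \<Rightarrow> (nat \<Rightarrow> nat) \<Rightarrow> perm set" where
  "SN nu n = {p. p permutes Omega nu n}"

text \<open>Product in the group algebra, with (g h)(x) = g (h x).\<close>
definition gmult :: "nat \<Rightarrow> (nat \<Rightarrow> nat) \<Rightarrow> galg \<Rightarrow> galg \<Rightarrow> galg" where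
  "gmult nu n x y = (\<lambda>g. \<Sum>h\<in>SN nu n. x h * y (inv h \<circ> g))"

definition gbasis :: "perm \<Rightarrow> galg" where
  "gbasis g = (\<lambda>h. if h = g then 1 else 0)"

definition Ysub :: "nat \<Rightarrow> (nat \<Rightarrow> nat) \<Rightarrow> perm set" where
  "Ysub nu n = {h \<in> SN nu n. \<forall>j<nu. h ` Pblk n j = Pblk n j}"

definition PiY :: "nat \<Rightarrow> (nat \<Rightarrow> nat) \<Rightarrow> galg" where
  "PiY nu n = (\<lambda>h. if h \<in> Ysub nu n then 1 / (\<Prod>j<nu. of_nat (fact (n j))) else 0)"

definition rfrak :: "nat \<Rightarrow> (nat \<Rightarrow> nat) \<Rightarrow> pt \<Rightarrow> pt \<Rightarrow> galg" where
  "rfrak nu n a b = gmult nu n (gmult nu n (PiY nu n) (gbasis (transpose a b))) (PiY nu n)"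

text \<open>rtil for blocks i, j using the transposition exchanging a (in P i) and b (in P j).\<close>
definition rtil :: "nat \<Rightarrow> (nat \<Rightarrow> nat) \<Rightarrow> nat \<Rightarrow> nat \<Rightarrow> pt \<Rightarrow> pt \<Rightarrow> galg" where
  "rtil nu n i j a b = (\<lambda>g. of_nat (n i * n j) * rfrak nu n a b g)"

definition gadd :: "galg \<Rightarrow> galg \<Rightarrow> galg" where
  "gadd x y = (\<lambda>g. x g + y g)"

definition gcomm :: "nat \<Rightarrow> (nat \<Rightarrow> nat) \<Rightarrow> galg \<Rightarrow> galg \<Rightarrow> galg" where
  "gcomm nu n x y = (\<lambda>g. gmult nu n x y g - gmult nu n y x g)"

end

theory Submission
  imports Defs
begin

(* Write E = Ysum for the sum of the Young subgroup Y and \<rho>(A) = transp_sum A for the sum of the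
   transpositions (a b) over a set A of pairs. Conjugating by elements of Y shows that E (a b) E does
   not depend on the choice of a \<in> P_i, b \<in> P_j, so rtil_ij is a scalar multiple of E \<rho>(P_i \<times> P_j) E.
   When A and B are Y-stable, E commutes with \<rho>(A) and \<rho>(B), so E \<rho>(A) E and E \<rho>(B) E commute
   as soon as \<rho>(A) and \<rho>(B) do. Conjugation by a transposition (a b) with a \<in> P_i, b \<in> P_j
   permutes the transpositions between P_i \<union> P_j and P_k and fixes those between P_k and P_l;
   hence \<rho>(P_i \<times> P_j) commutes with \<rho>((P_j \<union> P_i) \<times> P_k) and with \<rho>(P_k \<times> P_l). *)

definition gscale :: "complex \<Rightarrow> galg \<Rightarrow> galg" where
  "gscale k x = (\<lambda>g. k * x g)"

definition gsum :: "'a set \<Rightarrow> ('a \<Rightarrow> galg) \<Rightarrow> galg" where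
  "gsum A f = (\<lambda>g. \<Sum>p\<in>A. f p g)"

definition transp_sum :: "(pt \<times> pt) set \<Rightarrow> galg" where
  "transp_sum A = gsum A (\<lambda>(a, b). gbasis (transpose a b))"

lemma gsum_cong: "(\<And>p. p \<in> A \<Longrightarrow> f p = g p) \<Longrightarrow> gsum A f = gsum A g"
  unfolding gsum_def by (auto intro!: sum.cong)

lemma gsum_const: "gsum A (\<lambda>_. x) = gscale (of_nat (card A)) x"
  unfolding gsum_def gscale_def by simp

lemma gscale_gscale: "gscale a (gscale b x) = gscale (a * b) x"
  unfolding gscale_def by (simp add: mult.assoc)

lemma gadd_gscale: "gadd (gscale k x) (gscale k y) = gscale k (gadd x y)"
  unfolding gadd_def gscale_def by (simp add: ring_distribs)

lemma transp_sum_Un: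
  "finite A \<Longrightarrow> finite B \<Longrightarrow> A \<inter> B = {} \<Longrightarrow> transp_sum (A \<union> B) = gadd (transp_sum A) (transp_sum B)"
  unfolding transp_sum_def gsum_def gadd_def by (simp add: sum.union_disjoint)

lemma transpose_comp_transpose:
  "c \<noteq> a \<Longrightarrow> c \<noteq> b \<Longrightarrow> transpose a b \<circ> transpose x c = transpose (transpose a b x) c \<circ> transpose a b"
  by (auto simp: fun_eq_iff transpose_def)

lemma commute_sandwich:
  assumes assoc: "\<And>x y z. m (m x y) z = m x (m y z)"
    and er: "m e r = m r e" and es: "m e s = m s e" and rs: "m r s = m s r"
  shows "m (m (m e r) e) (m (m e s) e) = m (m (m e s) e) (m (m e r) e)"
proof -
  have pull_out: "m (m (m e r) e) (m (m e s) e) = m r (m s (m e (m e (m e e))))"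
    if er: "m e r = m r e" and es: "m e s = m s e" for r s
  proof -
    have "m e (m r x) = m r (m e x)" "m e (m s x) = m s (m e x)" for x
      by (metis assoc er, metis assoc es)
    then show ?thesis by (simp add: assoc er es)
  qed
  have "m r (m s x) = m s (m r x)" for x by (metis assoc rs)
  then show ?thesis using pull_out[OF er es] pull_out[OF es er] by simp
qed

lemma card_Pblk: "card (Pblk n j) = n j"
  unfolding Pblk_def by (simp add: card_cartesian_product)

lemma finite_Pblk: "finite (Pblk n j)"
  unfolding Pblk_def by simp

lemma Pblk_disjoint: "i \<noteq> j \<Longrightarrow> Pblk n i \<inter> Pblk n j = {}"
  unfolding Pblk_def by auto

lemma Pblk_neq: "x \<in> Pblk n i \<Longrightarrow> y \<in> Pblk n j \<Longrightarrow> i \<noteq> j \<Longrightarrow> x \<noteq> y"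
  unfolding Pblk_def by auto

lemma Pblk_subset_Omega: "j < nu \<Longrightarrow> Pblk n j \<subseteq> Omega nu n"
  unfolding Omega_def by auto

lemma finite_Omega: "finite (Omega nu n)"
  unfolding Omega_def Pblk_def by auto

context
  fixes nu :: nat and n :: "nat \<Rightarrow> nat"
begin

abbreviation gmult_infix :: "galg \<Rightarrow> galg \<Rightarrow> galg" (infixl \<open>\<star>\<close> 70) where
  "x \<star> y \<equiv> gmult nu n x y"

abbreviation Ynorm :: complex where
  "Ynorm \<equiv> 1 / (\<Prod>j<nu. of_nat (fact (n j)))"

definition Ysum :: galg where
  "Ysum = gsum (Ysub nu n) gbasis"

definition Y_stable :: "(pt \<times> pt) set \<Rightarrow> bool" where
  "Y_stable A \<longleftrightarrow> A \<subseteq> Omega nu n \<times> Omega nu n \<and> (\<forall>u\<in>Ysub nu n. \<forall>(a, b)\<in>A. (u a, u b) \<in> A)"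

lemma finite_SN: "finite (SN nu n)"
  unfolding SN_def using finite_permutations[OF finite_Omega] .

lemma SN_compose: "p \<in> SN nu n \<Longrightarrow> q \<in> SN nu n \<Longrightarrow> p \<circ> q \<in> SN nu n"
  unfolding SN_def by (auto intro: permutes_compose)

lemma SN_inv: "p \<in> SN nu n \<Longrightarrow> inv p \<in> SN nu n"
  unfolding SN_def by (auto intro: permutes_inv)

lemma SN_bij: "p \<in> SN nu n \<Longrightarrow> bij p"
  unfolding SN_def by (auto intro: permutes_bij)

lemma SN_inv_o: "p \<in> SN nu n \<Longrightarrow> p \<circ> inv p = id" "p \<in> SN nu n \<Longrightarrow> inv p \<circ> p = id"
  unfolding SN_def by (auto intro: permutes_inv_o)

lemma transpose_in_SN: "a \<in> Omega nu n \<Longrightarrow> b \<in> Omega nu n \<Longrightarrow> transpose a b \<in> SN nu n"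
  unfolding SN_def by (auto intro: permutes_swap_id)

lemma gmult_assoc: "x \<star> y \<star> z = x \<star> (y \<star> z)"
proof
  fix g
  let ?S = "SN nu n"
  have shift: "(\<Sum>h\<in>?S. y h * z (inv h \<circ> (inv k \<circ> g))) = (\<Sum>h\<in>?S. y (inv k \<circ> h) * z (inv h \<circ> g))"
    if k: "k \<in> ?S" for k
  proof (rule sum.reindex_bij_witness[where i="\<lambda>h. inv k \<circ> h" and j="\<lambda>h. k \<circ> h"])
    fix a assume a: "a \<in> ?S"
    show "inv k \<circ> (k \<circ> a) = a" using SN_inv_o[OF k] by (simp add: o_assoc)
    show "k \<circ> a \<in> ?S" using k a by (rule SN_compose)
    have "inv (k \<circ> a) = inv a \<circ> inv k" using SN_bij[OF k] SN_bij[OF a] by (simp add: o_inv_distrib)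
    then show "y (inv k \<circ> (k \<circ> a)) * z (inv (k \<circ> a) \<circ> g) = y a * z (inv a \<circ> (inv k \<circ> g))"
      using SN_inv_o[OF k] by (simp add: o_assoc)
  next
    fix b assume b: "b \<in> ?S"
    show "k \<circ> (inv k \<circ> b) = b" using SN_inv_o[OF k] by (simp add: o_assoc)
    show "inv k \<circ> b \<in> ?S" using SN_inv[OF k] b by (rule SN_compose)
  qed
  have "(x \<star> (y \<star> z)) g = (\<Sum>k\<in>?S. x k * (\<Sum>h\<in>?S. y (inv k \<circ> h) * z (inv h \<circ> g)))"
    unfolding gmult_def using shift by simp
  also have "\<dots> = (\<Sum>k\<in>?S. \<Sum>h\<in>?S. x k * y (inv k \<circ> h) * z (inv h \<circ> g))"
    by (simp add: sum_distrib_left mult.assoc)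
  also have "\<dots> = (\<Sum>h\<in>?S. \<Sum>k\<in>?S. x k * y (inv k \<circ> h) * z (inv h \<circ> g))"
    by (rule sum.swap)
  also have "\<dots> = (x \<star> y \<star> z) g"
    unfolding gmult_def by (simp add: sum_distrib_right)
  finally show "(x \<star> y \<star> z) g = (x \<star> (y \<star> z)) g" ..
qed

lemma gmult_gsum_left: "gsum A f \<star> y = gsum A (\<lambda>p. f p \<star> y)"
  unfolding gmult_def gsum_def by (auto simp: fun_eq_iff sum_distrib_right intro: sum.swap)

lemma gmult_gsum_right: "x \<star> gsum A f = gsum A (\<lambda>p. x \<star> f p)"
  unfolding gmult_def gsum_def by (auto simp: fun_eq_iff sum_distrib_left intro: sum.swap)

lemma gmult_gscale_left: "gscale k x \<star> y = gscale k (x \<star> y)"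
  unfolding gmult_def gscale_def by (auto simp: fun_eq_iff sum_distrib_left mult.assoc)

lemma gmult_gscale_right: "x \<star> gscale k y = gscale k (x \<star> y)"
  unfolding gmult_def gscale_def by (auto simp: fun_eq_iff sum_distrib_left mult.left_commute)

lemma gmult_gadd_left: "gadd x y \<star> z = gadd (x \<star> z) (y \<star> z)"
  unfolding gmult_def gadd_def by (auto simp: fun_eq_iff sum.distrib ring_distribs)

lemma gmult_gadd_right: "z \<star> gadd x y = gadd (z \<star> x) (z \<star> y)"
  unfolding gmult_def gadd_def by (auto simp: fun_eq_iff sum.distrib ring_distribs)

lemma gmult_gbasis: "s \<in> SN nu n \<Longrightarrow> gbasis s \<star> gbasis t = gbasis (s \<circ> t)"
proof
  fix g
  assume s: "s \<in> SN nu n"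
  have "(gbasis s \<star> gbasis t) g = (\<Sum>h\<in>SN nu n. if h = s then gbasis t (inv h \<circ> g) else 0)"
    unfolding gmult_def gbasis_def[of s] by (intro sum.cong) auto
  also have "\<dots> = gbasis t (inv s \<circ> g)"
    using s finite_SN by simp
  also have "\<dots> = gbasis (s \<circ> t) g"
    unfolding gbasis_def by (metis SN_inv_o[OF s] comp_assoc id_comp)
  finally show "(gbasis s \<star> gbasis t) g = gbasis (s \<circ> t) g" .
qed

lemma gcomm_gscale_eq_zero: "x \<star> y = y \<star> x \<Longrightarrow> gcomm nu n (gscale k x) (gscale k y) = (\<lambda>_. 0)"
  unfolding gcomm_def gmult_gscale_left gmult_gscale_right by (simp add: gscale_def)

lemma Ysub_subset_SN: "Ysub nu n \<subseteq> SN nu n"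
  unfolding Ysub_def by auto

lemma finite_Ysub: "finite (Ysub nu n)"
  using finite_subset[OF Ysub_subset_SN finite_SN] .

lemma Ysub_compose: "p \<in> Ysub nu n \<Longrightarrow> q \<in> Ysub nu n \<Longrightarrow> p \<circ> q \<in> Ysub nu n"
  unfolding Ysub_def by (simp add: SN_compose flip: image_image)

lemma Ysub_inv: "p \<in> Ysub nu n \<Longrightarrow> inv p \<in> Ysub nu n"
proof -
  assume p: "p \<in> Ysub nu n"
  then have ps: "p \<in> SN nu n" and blocks: "\<forall>j<nu. p ` Pblk n j = Pblk n j"
    unfolding Ysub_def by auto
  have "inv p ` Pblk n j = Pblk n j" if "j < nu" for j
    using image_inv_f_f[OF bij_is_inj[OF SN_bij[OF ps]], of "Pblk n j"] blocks that by simp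
  then show ?thesis using SN_inv[OF ps] unfolding Ysub_def by auto
qed

lemma Ysub_maps_Pblk: "u \<in> Ysub nu n \<Longrightarrow> j < nu \<Longrightarrow> x \<in> Pblk n j \<Longrightarrow> u x \<in> Pblk n j"
  unfolding Ysub_def by blast

lemma transpose_in_Ysub: "j < nu \<Longrightarrow> a \<in> Pblk n j \<Longrightarrow> b \<in> Pblk n j \<Longrightarrow> transpose a b \<in> Ysub nu n"
  unfolding Ysub_def using Pblk_subset_Omega[of j nu n]
  by (auto simp: Pblk_def intro!: transpose_in_SN transpose_image_eq)

lemma PiY_eq_gscale_Ysum: "PiY nu n = gscale Ynorm Ysum"
  unfolding PiY_def gscale_def Ysum_def gsum_def gbasis_def
  using finite_Ysub by (intro ext) simp

lemma Ysum_gmult_gbasis: "u \<in> Ysub nu n \<Longrightarrow> Ysum \<star> gbasis u = Ysum"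
proof -
  assume u: "u \<in> Ysub nu n"
  then have us: "u \<in> SN nu n"
    using Ysub_subset_SN by blast
  have "Ysum \<star> gbasis u = gsum (Ysub nu n) (\<lambda>v. gbasis (v \<circ> u))"
    unfolding Ysum_def gmult_gsum_left
    by (rule gsum_cong) (use Ysub_subset_SN in \<open>auto intro: gmult_gbasis\<close>)
  also have "\<dots> = Ysum"
    unfolding Ysum_def gsum_def
  proof (rule ext, rule sum.reindex_bij_witness[where j="\<lambda>v. v \<circ> u" and i="\<lambda>v. v \<circ> inv u"])
    fix v assume v: "v \<in> Ysub nu n"
    show "v \<circ> u \<circ> inv u = v" "v \<circ> inv u \<circ> u = v"
      using SN_inv_o[OF us] by (simp_all add: comp_assoc)
    show "v \<circ> u \<in> Ysub nu n" "v \<circ> inv u \<in> Ysub nu n"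
      using v u by (simp_all add: Ysub_compose Ysub_inv)
  qed simp
  finally show ?thesis .
qed

lemma gbasis_gmult_Ysum: "u \<in> Ysub nu n \<Longrightarrow> gbasis u \<star> Ysum = Ysum"
proof -
  assume u: "u \<in> Ysub nu n"
  then have us: "u \<in> SN nu n"
    using Ysub_subset_SN by blast
  have "gbasis u \<star> Ysum = gsum (Ysub nu n) (\<lambda>v. gbasis (u \<circ> v))"
    unfolding Ysum_def gmult_gsum_right
    by (rule gsum_cong) (use u Ysub_subset_SN in \<open>auto intro: gmult_gbasis\<close>)
  also have "\<dots> = Ysum"
    unfolding Ysum_def gsum_def
  proof (rule ext, rule sum.reindex_bij_witness[where j="\<lambda>v. u \<circ> v" and i="\<lambda>v. inv u \<circ> v"])
    fix v assume v: "v \<in> Ysub nu n"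
    show "inv u \<circ> (u \<circ> v) = v" "u \<circ> (inv u \<circ> v) = v"
      using SN_inv_o[OF us] by (simp_all add: comp_assoc[symmetric])
    show "u \<circ> v \<in> Ysub nu n" "inv u \<circ> v \<in> Ysub nu n"
      using v u by (simp_all add: Ysub_compose Ysub_inv)
  qed simp
  finally show ?thesis .
qed

lemma Y_stable_Pblk_times: "i < nu \<Longrightarrow> j < nu \<Longrightarrow> Y_stable (Pblk n i \<times> Pblk n j)"
  unfolding Y_stable_def using Pblk_subset_Omega[of i nu n] Pblk_subset_Omega[of j nu n] Ysub_maps_Pblk
  by auto

lemma Y_stable_Un: "Y_stable A \<Longrightarrow> Y_stable B \<Longrightarrow> Y_stable (A \<union> B)"
  unfolding Y_stable_def by blast

lemma gbasis_commute_transp_sum: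
  assumes s: "s \<in> SN nu n" and B: "B \<subseteq> Omega nu n \<times> Omega nu n" and f: "bij_betw f B B"
    and conj: "\<And>p. p \<in> B \<Longrightarrow> s \<circ> case_prod transpose p = case_prod transpose (f p) \<circ> s"
  shows "gbasis s \<star> transp_sum B = transp_sum B \<star> gbasis s"
proof -
  have "gbasis s \<star> transp_sum B = gsum B (\<lambda>p. gbasis (s \<circ> case_prod transpose p))"
    unfolding transp_sum_def gmult_gsum_right
    by (rule gsum_cong) (use s in \<open>auto intro: gmult_gbasis\<close>)
  also have "\<dots> = gsum B (\<lambda>p. gbasis (case_prod transpose (f p) \<circ> s))"
    using conj by (simp cong: gsum_cong)
  also have "\<dots> = gsum B (\<lambda>p. gbasis (case_prod transpose p \<circ> s))"
    unfolding gsum_def by (rule ext) (rule sum.reindex_bij_betw[OF f])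
  also have "\<dots> = transp_sum B \<star> gbasis s"
    unfolding transp_sum_def gmult_gsum_left
    by (rule gsum_cong) (use B in \<open>auto intro: gmult_gbasis[symmetric] transpose_in_SN\<close>)
  finally show ?thesis .
qed

lemma Ysum_commute_transp_sum:
  assumes A: "Y_stable A"
  shows "Ysum \<star> transp_sum A = transp_sum A \<star> Ysum"
proof -
  have stable: "(v a, v b) \<in> A" if "v \<in> Ysub nu n" "(a, b) \<in> A" for v a b
    using A that unfolding Y_stable_def by blast
  have "gbasis u \<star> transp_sum A = transp_sum A \<star> gbasis u" if u: "u \<in> Ysub nu n" for u
  proof (rule gbasis_commute_transp_sum)
    have bij: "bij u"
      using u Ysub_subset_SN SN_bij by auto
    show "u \<in> SN nu n"
      using u Ysub_subset_SN by auto
    show "A \<subseteq> Omega nu n \<times> Omega nu n"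
      using A unfolding Y_stable_def by simp
    show "bij_betw (map_prod u u) A A"
    proof (rule bij_betw_byWitness[where f'="map_prod (inv u) (inv u)"])
      show "map_prod u u ` A \<subseteq> A"
        using stable[OF u] by auto
      show "map_prod (inv u) (inv u) ` A \<subseteq> A"
        using stable[OF Ysub_inv[OF u]] by auto
    qed (auto simp: inv_f_f[OF bij_is_inj[OF bij]] surj_f_inv_f[OF bij_is_surj[OF bij]])
    show "u \<circ> case_prod transpose p = case_prod transpose (map_prod u u p) \<circ> u" for p
      using transpose_comp_eq[OF bij, of "u (fst p)" "u (snd p)"] bij
      by (auto simp: bij_is_inj split: prod.split)
  qed
  then show ?thesis
    unfolding Ysum_def gmult_gsum_left gmult_gsum_right by (rule gsum_cong)
qed

lemma transp_sum_commute:
  assumes A: "A \<subseteq> Omega nu n \<times> Omega nu n" and B: "B \<subseteq> Omega nu n \<times> Omega nu n"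
    and moves: "\<And>a b x y. (a, b) \<in> A \<Longrightarrow> (x, y) \<in> B \<Longrightarrow> y \<noteq> a \<and> y \<noteq> b \<and> (transpose a b x, y) \<in> B"
  shows "transp_sum A \<star> transp_sum B = transp_sum B \<star> transp_sum A"
proof -
  have "gbasis (transpose a b) \<star> transp_sum B = transp_sum B \<star> gbasis (transpose a b)"
    if ab: "(a, b) \<in> A" for a b
  proof (rule gbasis_commute_transp_sum)
    show "transpose a b \<in> SN nu n"
      using A ab by (auto intro: transpose_in_SN)
    show "B \<subseteq> Omega nu n \<times> Omega nu n"
      by (fact B)
    show "bij_betw (map_prod (transpose a b) id) B B"
      by (rule bij_betw_byWitness[where f'="map_prod (transpose a b) id"])
        (use moves[OF ab] in auto)
    show "transpose a b \<circ> case_prod transpose p = case_prod transpose (map_prod (transpose a b) id p) \<circ> transpose a b"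
      if "p \<in> B" for p
      using moves[OF ab] that by (cases p) (simp add: transpose_comp_transpose)
  qed
  then show ?thesis
    unfolding transp_sum_def[of A] gmult_gsum_left gmult_gsum_right by (auto intro: gsum_cong)
qed

lemma Ysum_sandwich_commute:
  assumes "Y_stable A" and "Y_stable B" and "transp_sum A \<star> transp_sum B = transp_sum B \<star> transp_sum A"
  shows "Ysum \<star> transp_sum A \<star> Ysum \<star> (Ysum \<star> transp_sum B \<star> Ysum)
       = Ysum \<star> transp_sum B \<star> Ysum \<star> (Ysum \<star> transp_sum A \<star> Ysum)"
  by (rule commute_sandwich[where m="gmult nu n"], rule gmult_assoc)
    (use assms in \<open>simp_all add: Ysum_commute_transp_sum\<close>)

lemma Ysum_sandwich_transpose_eq:
  assumes i: "i < nu" and j: "j < nu" and "i \<noteq> j"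
    and a: "a \<in> Pblk n i" "a' \<in> Pblk n i" and b: "b \<in> Pblk n j" "b' \<in> Pblk n j"
  shows "Ysum \<star> gbasis (transpose a b) \<star> Ysum = Ysum \<star> gbasis (transpose a' b') \<star> Ysum"
proof -
  \<comment> \<open>u \<in> Y carries a' to a and b' to b, so it conjugates (a' b') into (a b)\<close>
  define u where "u = transpose a a' \<circ> transpose b b'"
  have u: "u \<in> Ysub nu n"
    unfolding u_def using i j a b by (intro Ysub_compose transpose_in_Ysub)
  then have us: "u \<in> SN nu n"
    using Ysub_subset_SN by blast
  have ab: "transpose a b \<in> SN nu n"
    using i j a b Pblk_subset_Omega by (blast intro: transpose_in_SN)
  have "a \<noteq> b" "a \<noteq> b'" "a' \<noteq> b" "a' \<noteq> b'"
    using a b \<open>i \<noteq> j\<close> by (auto dest: Pblk_neq)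
  then have conj: "transpose a b \<circ> u = u \<circ> transpose a' b'"
    unfolding u_def by (auto simp: fun_eq_iff transpose_def)
  have "Ysum \<star> gbasis (transpose a b) \<star> Ysum = Ysum \<star> gbasis (transpose a b) \<star> (gbasis u \<star> Ysum)"
    using gbasis_gmult_Ysum[OF u] by simp
  also have "\<dots> = Ysum \<star> (gbasis (transpose a b) \<star> gbasis u) \<star> Ysum"
    by (simp only: gmult_assoc)
  also have "\<dots> = Ysum \<star> (gbasis u \<star> gbasis (transpose a' b')) \<star> Ysum"
    by (simp only: gmult_gbasis ab us conj)
  also have "\<dots> = Ysum \<star> gbasis u \<star> gbasis (transpose a' b') \<star> Ysum"
    by (simp only: gmult_assoc)
  also have "\<dots> = Ysum \<star> gbasis (transpose a' b') \<star> Ysum"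
    using Ysum_gmult_gbasis[OF u] by simp
  finally show ?thesis .
qed

lemma Ysum_sandwich_transp_sum_Pblk:
  assumes "i < nu" "j < nu" "i \<noteq> j" "a \<in> Pblk n i" "b \<in> Pblk n j"
  shows "Ysum \<star> transp_sum (Pblk n i \<times> Pblk n j) \<star> Ysum
       = gscale (of_nat (n i * n j)) (Ysum \<star> gbasis (transpose a b) \<star> Ysum)"
proof -
  have "Ysum \<star> transp_sum (Pblk n i \<times> Pblk n j) \<star> Ysum
      = gsum (Pblk n i \<times> Pblk n j) (\<lambda>(x, y). Ysum \<star> gbasis (transpose x y) \<star> Ysum)"
    unfolding transp_sum_def gmult_gsum_right gmult_gsum_left by (rule gsum_cong) auto
  also have "\<dots> = gsum (Pblk n i \<times> Pblk n j) (\<lambda>_. Ysum \<star> gbasis (transpose a b) \<star> Ysum)"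
    by (rule gsum_cong) (use assms in \<open>auto intro: Ysum_sandwich_transpose_eq\<close>)
  finally show ?thesis
    by (simp add: gsum_const card_cartesian_product card_Pblk)
qed

lemma rtil_eq_sandwich:
  assumes "i < nu" "j < nu" "i \<noteq> j" "a \<in> Pblk n i" "b \<in> Pblk n j"
  shows "rtil nu n i j a b = gscale (Ynorm * Ynorm) (Ysum \<star> transp_sum (Pblk n i \<times> Pblk n j) \<star> Ysum)"
  unfolding Ysum_sandwich_transp_sum_Pblk[OF assms] rtil_def rfrak_def PiY_eq_gscale_Ysum
    gmult_gscale_left gmult_gscale_right gscale_gscale
  by (simp add: gscale_def mult_ac)

lemma rtil_commute_adjacent:
  assumes "i < nu" "j < nu" "k < nu" "distinct [i, j, k]"
    and "a \<in> Pblk n i" "b \<in> Pblk n j" "c \<in> Pblk n j" "d \<in> Pblk n k" "e \<in> Pblk n i" "f \<in> Pblk n k"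
  shows "gcomm nu n (rtil nu n i j a b) (gadd (rtil nu n j k c d) (rtil nu n i k e f)) = (\<lambda>_. 0)"
proof -
  define B where "B = Pblk n j \<times> Pblk n k \<union> Pblk n i \<times> Pblk n k"
  have "Pblk n j \<times> Pblk n k \<inter> Pblk n i \<times> Pblk n k = {}"
    using assms Pblk_disjoint[of j i n] by auto
  then have sum_B: "gadd (rtil nu n j k c d) (rtil nu n i k e f) = gscale (Ynorm * Ynorm) (Ysum \<star> transp_sum B \<star> Ysum)"
    unfolding B_def using assms
    by (simp add: rtil_eq_sandwich gadd_gscale transp_sum_Un finite_Pblk gmult_gadd_left gmult_gadd_right)
  have "Y_stable B"
    unfolding B_def using assms by (intro Y_stable_Un Y_stable_Pblk_times)
  moreover have "transp_sum (Pblk n i \<times> Pblk n j) \<star> transp_sum B = transp_sum B \<star> transp_sum (Pblk n i \<times> Pblk n j)"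
  proof (rule transp_sum_commute)
    show "Pblk n i \<times> Pblk n j \<subseteq> Omega nu n \<times> Omega nu n" "B \<subseteq> Omega nu n \<times> Omega nu n"
      unfolding B_def using assms Pblk_subset_Omega by blast+
    fix x y z w
    assume "(x, y) \<in> Pblk n i \<times> Pblk n j" and "(z, w) \<in> B"
    moreover from this have "transpose x y z \<in> Pblk n j \<union> Pblk n i"
      unfolding B_def by (auto simp: transpose_def)
    ultimately show "w \<noteq> x \<and> w \<noteq> y \<and> (transpose x y z, w) \<in> B"
      unfolding B_def using assms by (auto dest: Pblk_neq)
  qed
  ultimately show ?thesis
    unfolding sum_B using assms
    by (simp add: rtil_eq_sandwich gcomm_gscale_eq_zero Ysum_sandwich_commute Y_stable_Pblk_times)
qed

lemma rtil_commute_disjoint: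
  assumes "i < nu" "j < nu" "k < nu" "l < nu" "distinct [i, j, k, l]"
    and "a \<in> Pblk n i" "b \<in> Pblk n j" "c \<in> Pblk n k" "d \<in> Pblk n l"
  shows "gcomm nu n (rtil nu n i j a b) (rtil nu n k l c d) = (\<lambda>_. 0)"
proof -
  have "transp_sum (Pblk n i \<times> Pblk n j) \<star> transp_sum (Pblk n k \<times> Pblk n l)
      = transp_sum (Pblk n k \<times> Pblk n l) \<star> transp_sum (Pblk n i \<times> Pblk n j)"
  proof (rule transp_sum_commute)
    show "Pblk n i \<times> Pblk n j \<subseteq> Omega nu n \<times> Omega nu n" "Pblk n k \<times> Pblk n l \<subseteq> Omega nu n \<times> Omega nu n"
      using assms Pblk_subset_Omega by blast+
    fix x y z w
    assume "(x, y) \<in> Pblk n i \<times> Pblk n j" and "(z, w) \<in> Pblk n k \<times> Pblk n l"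
    moreover from this have "z \<noteq> x" "z \<noteq> y" "w \<noteq> x" "w \<noteq> y"
      using assms by (auto dest: Pblk_neq)
    ultimately show "w \<noteq> x \<and> w \<noteq> y \<and> (transpose x y z, w) \<in> Pblk n k \<times> Pblk n l"
      by simp
  qed
  then show ?thesis
    using assms by (simp add: rtil_eq_sandwich gcomm_gscale_eq_zero Ysum_sandwich_commute Y_stable_Pblk_times)
qed

end

theorem theorem2:
  fixes nu :: nat and n :: "nat \<Rightarrow> nat" and c :: "nat \<Rightarrow> nat \<Rightarrow> pt \<times> pt"
  assumes "nu \<ge> 2"
    and "\<forall>j<nu. n j \<ge> 1"
    and "\<forall>i<nu. \<forall>j<nu. i \<noteq> j \<longrightarrow> fst (c i j) \<in> Pblk n i \<and> snd (c i j) \<in> Pblk n j"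
  shows "(\<forall>i j k. i < nu \<and> j < nu \<and> k < nu \<and> i \<noteq> j \<and> j \<noteq> k \<and> i \<noteq> k \<longrightarrow>
            gcomm nu n (rtil nu n i j (fst (c i j)) (snd (c i j)))
              (gadd (rtil nu n j k (fst (c j k)) (snd (c j k)))
                    (rtil nu n i k (fst (c i k)) (snd (c i k)))) = (\<lambda>_. 0))
       \<and> (\<forall>i j k l. i < nu \<and> j < nu \<and> k < nu \<and> l < nu \<and> distinct [i, j, k, l] \<longrightarrow>
            gcomm nu n (rtil nu n i j (fst (c i j)) (snd (c i j)))
              (rtil nu n k l (fst (c k l)) (snd (c k l))) = (\<lambda>_. 0))"
proof (intro conjI allI impI)
  fix i j k
  assume "i < nu \<and> j < nu \<and> k < nu \<and> i \<noteq> j \<and> j \<noteq> k \<and> i \<noteq> k"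
  then show "gcomm nu n (rtil nu n i j (fst (c i j)) (snd (c i j)))
      (gadd (rtil nu n j k (fst (c j k)) (snd (c j k))) (rtil nu n i k (fst (c i k)) (snd (c i k)))) = (\<lambda>_. 0)"
    using assms(3) by (intro rtil_commute_adjacent) auto
next
  fix i j k l
  assume "i < nu \<and> j < nu \<and> k < nu \<and> l < nu \<and> distinct [i, j, k, l]"
  then show "gcomm nu n (rtil nu n i j (fst (c i j)) (snd (c i j))) (rtil nu n k l (fst (c k l)) (snd (c k l)))
      = (\<lambda>_. 0)"
    using assms(3) by (intro rtil_commute_disjoint) auto
qed

end
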